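(* Let $\lambda\in ba(\mathcal A)$ and let $\mathscr M\subset ba(\mathcal A)_+$ be convex and weak$^*$ compact. Then $\lambda\perp\mu$ for every $\mu\in\mathscr M$ if and only if $\lambda\perp_u\mathscr M$, i.e. for every $\varepsilon>0$ there is $A\in\mathcal A$ with $\sup_{\mu\in\mathscr M}|\mu|(A)+|\lambda|(A^c)<\varepsilon$.
   Context: $\mathcal A$ is an algebra of subsets of a set $\Omega$, $ba(\mathcal A)$ the space of bounded finitely additive real set functions on $\mathcal A$, $ba(\mathcal A)_+$ its nonnegative elements, $|\mu|$ total variation. $\mu\perp\lambda$ means: for every $\varepsilon>0$ there is $A\in\mathcal A$ with $|\mu|(A)+|\lambda|(A^c)<\varepsilon$. The weak$^*$ topology on $ba(\mathcal A)$ is that of pointwise convergence on $\mathcal A$-simple functions, $\mu\mapsto\mu(f)=\int f\,d\mu$ (i.e. $ba(\mathcal A)$ viewed as the dual of the space of uniform limits of simple functions). *)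

theory Defs
  imports "HOL-Analysis.Analysis"
begin

text \<open>Set functions are modelled as functions of type 'a set => real; elements of ba(A)
  are required to vanish outside the algebra A (a normalisation of their domain).\<close>

definition ba :: "'a set \<Rightarrow> 'a set set \<Rightarrow> ('a set \<Rightarrow> real) set" where
  "ba \<Omega> \<A> = {\<mu>. (\<forall>A\<in>\<A>. \<forall>B\<in>\<A>. A \<inter> B = {} \<longrightarrow> \<mu> (A \<union> B) = \<mu> A + \<mu> B)
                 \<and> (\<exists>K. \<forall>A\<in>\<A>. \<bar>\<mu> A\<bar> \<le> K)
                 \<and> (\<forall>A. A \<notin> \<A> \<longrightarrow> \<mu> A = 0)}"

definition ba_pos :: "'a set \<Rightarrow> 'a set set \<Rightarrow> ('a set \<Rightarrow> real) set" where
  "ba_pos \<Omega> \<A> = {\<mu> \<in> ba \<Omega> \<A>. \<forall>A\<in>\<A>. 0 \<le> \<mu> A}"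

definition tv :: "'a set set \<Rightarrow> ('a set \<Rightarrow> real) \<Rightarrow> 'a set \<Rightarrow> real" where
  "tv \<A> \<mu> A = Sup {(\<Sum>B\<in>P. \<bar>\<mu> B\<bar>) | P. finite P \<and> P \<subseteq> \<A> \<and> disjoint P \<and> \<Union>P = A}"

definition singular :: "'a set \<Rightarrow> 'a set set \<Rightarrow> ('a set \<Rightarrow> real) \<Rightarrow> ('a set \<Rightarrow> real) \<Rightarrow> bool" where
  "singular \<Omega> \<A> \<mu> la \<longleftrightarrow> (\<forall>\<epsilon>>0. \<exists>A\<in>\<A>. tv \<A> \<mu> A + tv \<A> la (\<Omega> - A) < \<epsilon>)"

text \<open>Uniform singularity: sup_{mu in M} |mu|(A) + |lambda|(A^c) < eps, with the supremum
  written out (it is < eps - |lambda|(A^c) iff some upper bound c is; empty M gives sup = -infinity).\<close>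
definition unif_singular :: "'a set \<Rightarrow> 'a set set \<Rightarrow> ('a set \<Rightarrow> real) \<Rightarrow> ('a set \<Rightarrow> real) set \<Rightarrow> bool" where
  "unif_singular \<Omega> \<A> la M \<longleftrightarrow>
     (\<forall>\<epsilon>>0. \<exists>A\<in>\<A>. \<exists>c. (\<forall>\<mu>\<in>M. tv \<A> \<mu> A \<le> c) \<and> c + tv \<A> la (\<Omega> - A) < \<epsilon>)"

definition simple_fn :: "'a set \<Rightarrow> 'a set set \<Rightarrow> ('a \<Rightarrow> real) \<Rightarrow> bool" where
  "simple_fn \<Omega> \<A> f \<longleftrightarrow> finite (f ` \<Omega>) \<and> (\<forall>y. {x\<in>\<Omega>. f x = y} \<in> \<A>)"

definition simple_int :: "'a set \<Rightarrow> ('a set \<Rightarrow> real) \<Rightarrow> ('a \<Rightarrow> real) \<Rightarrow> real" where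
  "simple_int \<Omega> \<mu> f = (\<Sum>y\<in>f ` \<Omega>. y * \<mu> {x\<in>\<Omega>. f x = y})"

definition wstar :: "'a set \<Rightarrow> 'a set set \<Rightarrow> ('a set \<Rightarrow> real) topology" where
  "wstar \<Omega> \<A> = topology_generated_by
     {{\<mu>. simple_int \<Omega> \<mu> f \<in> U} | f U. simple_fn \<Omega> \<A> f \<and> open U}"

definition convex_sf :: "('a set \<Rightarrow> real) set \<Rightarrow> bool" where
  "convex_sf M \<longleftrightarrow> (\<forall>\<mu>\<in>M. \<forall>\<nu>\<in>M. \<forall>t::real. 0 \<le> t \<and> t \<le> 1 \<longrightarrow>
       (\<lambda>A. t * \<mu> A + (1 - t) * \<nu> A) \<in> M)"

end

theory Submission
  imports Defs
begin

text \<open>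
  The easy direction is immediate: a set that works uniformly for the family works for each
  member.  For the converse fix \<open>\<epsilon> > 0\<close>.  Singularity gives each \<open>\<mu>\<close> in the family a set
  \<open>B\<close> with \<open>\<mu> B + |\<lambda>|(\<Omega> - B) < \<epsilon>/4\<close>; since evaluation at \<open>B\<close> is weak* continuous,
  compactness leaves finitely many such sets covering the family, and a minimax theorem for
  finitely many affine continuous functions on a compact convex set (proved from the
  separating hyperplane theorem in the plane by induction) produces one convex combination
  with weights \<open>t\<close> such that \<open>\<Sum>t B (\<mu> B + |\<lambda>|(\<Omega> - B)) < \<epsilon>/4\<close> for every \<open>\<mu>\<close>.  Finally the
  set of points covered by sets of total weight above one half is rounded into a single set
  \<open>A\<close>: Markov's inequality for finitely additive set functions bounds \<open>\<mu> A\<close> and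
  \<open>|\<lambda>|(\<Omega> - A)\<close> by twice the corresponding averages, since \<open>|\<lambda>|\<close> is additive.
\<close>

lemma quadrant_separation:
  fixes S :: "(real \<times> real) set"
  assumes S: "compact S" "convex S" "S \<noteq> {}" and avoid: "\<forall>p\<in>S. fst p < 0 \<or> snd p < 0"
  obtains a1 a2 where "0 \<le> a1" "0 \<le> a2" "0 < a1 + a2" "\<forall>p\<in>S. a1 * fst p + a2 * snd p < 0"
proof -
  define T where "T = {p::real\<times>real. 0 \<le> fst p \<and> 0 \<le> snd p}"
  have "closed T" unfolding T_def
    by (intro closed_Collect_conj closed_Collect_le continuous_intros)
  moreover have "convex T" unfolding T_def convex_def by auto
  moreover have "S \<inter> T = {}" unfolding T_def using avoid by force
  ultimately obtain a b where ab: "\<forall>x\<in>S. inner a x < b" "\<forall>x\<in>T. inner a x > b"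
    using separating_hyperplane_compact_closed[OF S(2,1,3)] by blast
  obtain a1 a2 where a: "a = (a1,a2)" by (cases a)
  have b0: "b < 0" using ab(2)[rule_format, of "(0,0)"] unfolding T_def by (simp add: a)
  have a1: "a1 \<ge> 0"
  proof (rule ccontr)
    assume "\<not> a1 \<ge> 0"
    then have "(b/a1, 0) \<in> T" using b0 unfolding T_def by (auto simp: divide_nonpos_neg)
    from ab(2)[rule_format, OF this] have "b < a1*(b/a1)" by (simp add: a)
    with \<open>\<not> a1 \<ge> 0\<close> show False by simp
  qed
  have a2: "a2 \<ge> 0"
  proof (rule ccontr)
    assume "\<not> a2 \<ge> 0"
    then have "(0, b/a2) \<in> T" using b0 unfolding T_def by (auto simp: divide_nonpos_neg)
    from ab(2)[rule_format, OF this] have "b < a2*(b/a2)" by (simp add: a)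
    with \<open>\<not> a2 \<ge> 0\<close> show False by simp
  qed
  have neg: "\<forall>p\<in>S. a1 * fst p + a2 * snd p < 0"
    using ab(1) b0 by (auto simp: a inner_prod_def)
  obtain p where "p \<in> S" using S(3) by blast
  have "a1 + a2 \<noteq> 0"
  proof
    assume "a1 + a2 = 0"
    then have "a1 = 0" "a2 = 0" using a1 a2 by linarith+
    then show False using bspec[OF neg \<open>p \<in> S\<close>] by simp
  qed
  with a1 a2 neg show thesis by (intro that) auto
qed

definition affine_cont_on ::
    "'b topology \<Rightarrow> 'b set \<Rightarrow> (real \<Rightarrow> 'b \<Rightarrow> 'b \<Rightarrow> 'b) \<Rightarrow> ('b \<Rightarrow> real) \<Rightarrow> bool" where
  "affine_cont_on X K mix g \<longleftrightarrow> continuous_map (subtopology X K) euclideanreal g \<and>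
     (\<forall>t y z. y \<in> K \<longrightarrow> z \<in> K \<longrightarrow> 0 \<le> t \<longrightarrow> t \<le> 1 \<longrightarrow> g (mix t y z) = t * g y + (1 - t) * g z)"

lemma affine_cont_on_subset:
  assumes "affine_cont_on X K mix g" and "K' \<subseteq> K"
  shows "affine_cont_on X K' mix g"
  using assms continuous_map_from_subtopology[of "subtopology X K" euclideanreal g K']
  unfolding affine_cont_on_def by (auto simp: subtopology_subtopology Int_absorb1)

lemma affine_cont_on_sum:
  assumes "finite I" and "\<forall>i\<in>I. affine_cont_on X K mix (g i)"
  shows "affine_cont_on X K mix (\<lambda>y. \<Sum>i\<in>I. s i * g i y)"
  unfolding affine_cont_on_def
proof (intro conjI allI impI)
  show "continuous_map (subtopology X K) euclideanreal (\<lambda>y. \<Sum>i\<in>I. s i * g i y)"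
    using assms unfolding affine_cont_on_def by (intro continuous_map_sum continuous_intros) auto
  fix t :: real and y z assume "y \<in> K" "z \<in> K" "0 \<le> t" "t \<le> 1"
  then have aff_i: "g i (mix t y z) = t * g i y + (1 - t) * g i z" if "i \<in> I" for i
    using assms(2) that unfolding affine_cont_on_def by blast
  have "(\<Sum>i\<in>I. s i * g i (mix t y z)) = (\<Sum>i\<in>I. t * (s i * g i y) + (1 - t) * (s i * g i z))"
    by (intro sum.cong refl) (simp add: aff_i algebra_simps)
  then show "(\<Sum>i\<in>I. s i * g i (mix t y z)) = t * (\<Sum>i\<in>I. s i * g i y) + (1 - t) * (\<Sum>i\<in>I. s i * g i z)"
    by (simp add: sum.distrib sum_distrib_left)
qed

lemma minimax_two:
  fixes X :: "'b topology" and K :: "'b set" and mix :: "real \<Rightarrow> 'b \<Rightarrow> 'b \<Rightarrow> 'b"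
    and h g :: "'b \<Rightarrow> real"
  assumes cpt: "compactin X K"
    and mixK: "\<And>t y z. y\<in>K \<Longrightarrow> z\<in>K \<Longrightarrow> 0\<le>t \<Longrightarrow> t\<le>1 \<Longrightarrow> mix t y z \<in> K"
    and h: "affine_cont_on X K mix h" and g: "affine_cont_on X K mix g"
    and cov: "\<And>y. y\<in>K \<Longrightarrow> h y < 0 \<or> g y < 0"
    and ne: "K \<noteq> {}"
  shows "\<exists>r. 0\<le>r \<and> r\<le>1 \<and> (\<forall>y\<in>K. r*h y + (1-r)*g y < 0)"
proof -
  define S where "S = (\<lambda>y. (h y, g y)) ` K"
  have "compactin (subtopology X K) K" using cpt by (simp add: compactin_subtopology)
  moreover have hc: "continuous_map (subtopology X K) euclideanreal h"
    and gc: "continuous_map (subtopology X K) euclideanreal g"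
    using h g unfolding affine_cont_on_def by simp_all
  then have "continuous_map (subtopology X K) euclidean (\<lambda>y. (h y, g y))"
    using continuous_map_pairedI[OF hc gc] by simp
  ultimately have "compactin euclidean S" unfolding S_def by (rule image_compactin)
  then have "compact S" by simp
  moreover have "convex S" unfolding convex_def S_def
  proof (clarify)
    fix y z u v assume yz: "y\<in>K" "z\<in>K" and uv: "0\<le>(u::real)" "0\<le>v" "u+v=1"
    show "u *\<^sub>R (h y, g y) + v *\<^sub>R (h z, g z) \<in> (\<lambda>y. (h y, g y)) ` K"
      using yz uv h g mixK unfolding affine_cont_on_def
      by (intro image_eqI[where x="mix u y z"]) (auto simp: eq_diff_eq)
  qed
  moreover have "S \<noteq> {}" "\<forall>p\<in>S. fst p < 0 \<or> snd p < 0" using ne cov unfolding S_def by auto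
  ultimately obtain a1 a2 where a: "0 \<le> a1" "0 \<le> a2" "0 < a1 + a2"
    and neg: "\<forall>y\<in>K. a1 * h y + a2 * g y < 0"
    by (rule quadrant_separation) (auto simp: S_def)
  show ?thesis
  proof (intro exI conjI ballI)
    show "0 \<le> a1/(a1+a2)" "a1/(a1+a2) \<le> 1" using a by simp_all
    fix y assume "y\<in>K"
    have "1 - a1/(a1+a2) = a2/(a1+a2)" using a(3) by (simp add: field_simps)
    then have "a1/(a1+a2) * h y + (1 - a1/(a1+a2)) * g y = (a1 * h y + a2 * g y)/(a1+a2)"
      by (simp add: add_divide_distrib)
    also have "\<dots> < 0" using neg \<open>y\<in>K\<close> a(3) by (simp add: divide_neg_pos)
    finally show "a1/(a1+a2) * h y + (1 - a1/(a1+a2)) * g y < 0" .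
  qed
qed

lemma compactin_nonneg_part:
  assumes cpt: "compactin X K" and cont: "continuous_map (subtopology X K) euclideanreal g"
  shows "compactin X {y\<in>K. 0 \<le> g y}"
proof -
  have "closedin (subtopology X K) {y \<in> topspace (subtopology X K). g y \<in> {0..}}"
    by (rule closedin_continuous_map_preimage[OF cont]) simp_all
  moreover have "{y \<in> topspace (subtopology X K). g y \<in> {0..}} = {y\<in>K. 0 \<le> g y}"
    using compactin_subset_topspace[OF cpt] by auto
  ultimately have "closedin (subtopology X K) {y\<in>K. 0 \<le> g y}" by simp
  then have "compactin (subtopology X K) {y\<in>K. 0 \<le> g y}"
    by (rule closedin_compact_space[OF compact_space_subtopology[OF cpt]])
  then show ?thesis by (simp add: compactin_subtopology)
qed

lemma convex_weights_insert:
  fixes s :: "'i \<Rightarrow> real" and f :: "'i \<Rightarrow> real"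
  assumes I: "finite I" "j \<notin> I" and s: "\<forall>i\<in>I. 0 \<le> s i" "sum s I = 1" and r: "0 \<le> r" "r \<le> 1"
  defines "w \<equiv> \<lambda>i. if i = j then 1 - r else r * s i"
  shows "\<forall>i\<in>insert j I. 0 \<le> w i" and "sum w (insert j I) = 1"
    and "(\<Sum>i\<in>insert j I. w i * f i) = r * (\<Sum>i\<in>I. s i * f i) + (1 - r) * f j"
proof -
  have w_I: "\<forall>i\<in>I. w i = r * s i" using I unfolding w_def by auto
  show "\<forall>i\<in>insert j I. 0 \<le> w i" using r s unfolding w_def by auto
  show "sum w (insert j I) = 1"
    using I s(2) w_I by (simp add: w_def sum_distrib_left[symmetric])
  show "(\<Sum>i\<in>insert j I. w i * f i) = r * (\<Sum>i\<in>I. s i * f i) + (1 - r) * f j"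
    using I w_I by (simp add: w_def sum_distrib_left mult.assoc)
qed

lemma minimax_finite:
  fixes X :: "'b topology" and mix :: "real \<Rightarrow> 'b \<Rightarrow> 'b \<Rightarrow> 'b"
    and g :: "'i \<Rightarrow> 'b \<Rightarrow> real" and I :: "'i set"
  assumes "finite I"
    and "compactin X K"
    and "\<And>t y z. y\<in>K \<Longrightarrow> z\<in>K \<Longrightarrow> 0\<le>t \<Longrightarrow> t\<le>1 \<Longrightarrow> mix t y z \<in> K"
    and "\<forall>i\<in>I. affine_cont_on X K mix (g i)"
    and "\<And>y. y\<in>K \<Longrightarrow> \<exists>i\<in>I. g i y < 0"
    and "K \<noteq> {}"
  shows "\<exists>t. (\<forall>i\<in>I. 0 \<le> t i) \<and> sum t I = 1 \<and> (\<forall>y\<in>K. (\<Sum>i\<in>I. t i * g i y) < 0)"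
  using assms
proof (induction I arbitrary: K rule: finite_induct)
  case empty
  then show ?case by auto
next
  case (insert j I)
  note cpt = insert.prems(1) and mixK = insert.prems(2) and aff = insert.prems(3)
    and cov = insert.prems(4)
  define K' where "K' = {y\<in>K. 0 \<le> g j y}"
  show ?case
  proof (cases "K' = {}")
    case True
    have "(\<Sum>i\<in>I. (if i = j then 1 else 0) * g i y) = 0" for y
      using insert.hyps by (intro sum.neutral) auto
    with True show ?thesis
      by (intro exI[where x="\<lambda>i. if i = j then 1 else 0"]) (auto simp: K'_def insert.hyps)
  next
    case False
    have gj: "affine_cont_on X K mix (g j)" using aff by simp
    have "K' \<subseteq> K" unfolding K'_def by auto
    \<comment> \<open>Where \<open>g j\<close> is nonnegative, the remaining functions already cover.\<close>
    have "\<exists>s. (\<forall>i\<in>I. 0 \<le> s i) \<and> sum s I = 1 \<and> (\<forall>y\<in>K'. (\<Sum>i\<in>I. s i * g i y) < 0)"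
    proof (rule insert.IH)
      show "compactin X K'"
        unfolding K'_def using compactin_nonneg_part[OF cpt] gj by (simp add: affine_cont_on_def)
      show "mix t y z \<in> K'" if "y\<in>K'" "z\<in>K'" "0\<le>t" "t\<le>1" for t y z
        using gj mixK[of y z t] that \<open>K' \<subseteq> K\<close> unfolding K'_def affine_cont_on_def by auto
      show "\<forall>i\<in>I. affine_cont_on X K' mix (g i)"
        using aff affine_cont_on_subset[OF _ \<open>K' \<subseteq> K\<close>] by blast
      show "\<exists>i\<in>I. g i y < 0" if "y \<in> K'" for y
        using cov[of y] that unfolding K'_def by force
    qed (use False in simp)
    then obtain s where s: "\<forall>i\<in>I. 0 \<le> s i" "sum s I = 1" "\<forall>y\<in>K'. (\<Sum>i\<in>I. s i * g i y) < 0"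
      by blast
    define h where "h = (\<lambda>y. \<Sum>i\<in>I. s i * g i y)"
    have "\<exists>r. 0\<le>r \<and> r\<le>1 \<and> (\<forall>y\<in>K. r * h y + (1-r) * g j y < 0)"
    proof (rule minimax_two[OF cpt mixK _ gj])
      show "affine_cont_on X K mix h"
        unfolding h_def using insert.hyps aff by (intro affine_cont_on_sum) auto
      show "h y < 0 \<or> g j y < 0" if "y \<in> K" for y
        using s(3) that unfolding K'_def h_def by force
    qed (use insert.prems(5) in auto)
    then obtain r where r: "0\<le>r" "r\<le>1" "\<forall>y\<in>K. r * h y + (1-r) * g j y < 0" by blast
    note w = convex_weights_insert[OF insert.hyps s(1,2) r(1,2)]
    show ?thesis
    proof (intro exI[of _ "\<lambda>i. if i = j then 1 - r else r * s i"] conjI w(1,2) ballI)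
      fix y assume "y \<in> K"
      then show "(\<Sum>i\<in>insert j I. (if i = j then 1 - r else r * s i) * g i y) < 0"
        using w(3)[of "\<lambda>i. g i y"] r(3) unfolding h_def by simp
    qed
  qed
qed

text \<open>Elementary facts on real-valued finitely additive set functions on an algebra; the
  corresponding library facts are stated for nonnegative extended reals only.\<close>

context algebra begin

lemma additive_empty:
  fixes \<mu> :: "'a set \<Rightarrow> real"
  assumes "additive M \<mu>"
  shows "\<mu> {} = 0"
  using additiveD[OF assms, of "{}" "{}"] by simp

lemma additive_Union:
  fixes \<mu> :: "'a set \<Rightarrow> real"
  assumes add: "additive M \<mu>" and "finite P" "P \<subseteq> M" "disjoint P"
  shows "\<mu> (\<Union>P) = (\<Sum>B\<in>P. \<mu> B)"
  using assms(2-4)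
proof (induction P rule: finite_induct)
  case empty
  then show ?case using additive_empty[OF add] by simp
next
  case (insert B P)
  have "B \<inter> \<Union>P = {}"
    using insert.prems(2) insert.hyps(2) unfolding pairwise_insert disjnt_def by blast
  then have "\<mu> (B \<union> \<Union>P) = \<mu> B + \<mu> (\<Union>P)"
    using insert.prems(1) insert.hyps(1) by (intro additiveD[OF add]) auto
  with insert show ?case by (simp add: pairwise_insert)
qed

lemma additive_split:
  fixes \<nu> :: "'a set \<Rightarrow> real"
  assumes "additive M \<nu>" and "E \<in> M" "C \<in> M"
  shows "\<nu> E = \<nu> (E \<inter> C) + \<nu> (E - C)"
proof -
  have "E = (E \<inter> C) \<union> (E - C)" by blast
  then show ?thesis using additiveD[OF assms(1), of "E \<inter> C" "E - C"] assms(2,3) by auto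
qed

lemma additive_nonneg_increasing:
  fixes \<mu> :: "'a set \<Rightarrow> real"
  assumes add: "additive M \<mu>" and pos: "\<forall>A\<in>M. 0 \<le> \<mu> A"
  shows "increasing M \<mu>"
  unfolding increasing_def
proof (intro ballI impI)
  fix A B assume "A \<in> M" "B \<in> M" "A \<subseteq> B"
  then have "\<mu> B = \<mu> A + \<mu> (B - A)"
    using additive_split[OF add \<open>B \<in> M\<close> \<open>A \<in> M\<close>] by (simp add: Int_absorb1)
  then show "\<mu> A \<le> \<mu> B" using pos \<open>A \<in> M\<close> \<open>B \<in> M\<close> by auto
qed

end

lemma ba_additive: "\<mu> \<in> ba \<Omega> \<A> \<Longrightarrow> additive \<A> \<mu>"
  unfolding ba_def additive_def by blast

lemma ba_bounded: "\<mu> \<in> ba \<Omega> \<A> \<Longrightarrow> \<exists>K. \<forall>A\<in>\<A>. \<bar>\<mu> A\<bar> \<le> K"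
  unfolding ba_def by blast

lemma ba_posD:
  assumes "\<mu> \<in> ba_pos \<Omega> \<A>"
  shows "additive \<A> \<mu>" and "\<forall>A\<in>\<A>. 0 \<le> \<mu> A"
  using assms ba_additive unfolding ba_pos_def by auto

definition partition_sums :: "'a set set \<Rightarrow> ('a set \<Rightarrow> real) \<Rightarrow> 'a set \<Rightarrow> real set" where
  "partition_sums \<A> \<mu> A =
     {(\<Sum>B\<in>P. \<bar>\<mu> B\<bar>) | P. finite P \<and> P \<subseteq> \<A> \<and> disjoint P \<and> \<Union>P = A}"

lemma tv_eq_Sup: "tv \<A> \<mu> A = Sup (partition_sums \<A> \<mu> A)"
  unfolding tv_def partition_sums_def ..

lemma partition_sums_single: "A \<in> \<A> \<Longrightarrow> \<bar>\<mu> A\<bar> \<in> partition_sums \<A> \<mu> A"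
  unfolding partition_sums_def by (intro CollectI exI[of _ "{A}"]) auto

context algebra begin

text \<open>A bounded additive set function has bounded partition sums: the members of a partition
  on which it is nonnegative, resp. negative, have unions of measure at most the bound.\<close>

lemma partition_sums_bounded:
  assumes la: "la \<in> ba \<Omega> M"
  shows "bdd_above (partition_sums M la A)"
proof -
  note add = ba_additive[OF la]
  obtain K where K: "\<forall>A\<in>M. \<bar>la A\<bar> \<le> K" using ba_bounded[OF la] by blast
  show ?thesis
  proof (rule bdd_aboveI[where M="2*K"])
    fix x assume "x \<in> partition_sums M la A"
    then obtain P where P: "x = (\<Sum>B\<in>P. \<bar>la B\<bar>)" "finite P" "P \<subseteq> M" "disjoint P"
      unfolding partition_sums_def by blast
    define Pp where "Pp = {B\<in>P. 0 \<le> la B}"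
    define Pn where "Pn = {B\<in>P. la B < 0}"
    have parts: "finite Pp" "Pp \<subseteq> M" "disjoint Pp" "finite Pn" "Pn \<subseteq> M" "disjoint Pn"
      using P pairwise_subset[OF P(4)] unfolding Pp_def Pn_def by auto
    have "x = (\<Sum>B\<in>Pp. \<bar>la B\<bar>) + (\<Sum>B\<in>Pn. \<bar>la B\<bar>)"
      unfolding P(1) Pp_def Pn_def using P(2) by (subst sum.union_disjoint[symmetric]) (auto intro: sum.cong)
    also have "\<dots> = (\<Sum>B\<in>Pp. la B) - (\<Sum>B\<in>Pn. la B)"
      unfolding Pp_def Pn_def by (simp add: sum_negf[symmetric])
    also have "\<dots> = la (\<Union>Pp) - la (\<Union>Pn)"
      using additive_Union[OF add] parts by simp
    also have "\<dots> \<le> 2*K"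
    proof -
      have "\<Union>Pp \<in> M" "\<Union>Pn \<in> M" using parts by (simp_all add: finite_Union)
      then show ?thesis using K by (smt (verit))
    qed
    finally show "x \<le> 2*K" .
  qed
qed

lemma tv_upper:
  assumes "la \<in> ba \<Omega> M" "x \<in> partition_sums M la A"
  shows "x \<le> tv M la A"
  unfolding tv_eq_Sup using partition_sums_bounded[OF assms(1)] assms(2) by (rule cSup_upper[rotated])

lemma tv_least:
  assumes "A \<in> M" "\<And>x. x \<in> partition_sums M la A \<Longrightarrow> x \<le> z"
  shows "tv M la A \<le> z"
  unfolding tv_eq_Sup using partition_sums_single[OF assms(1)] assms(2) by (intro cSup_least) auto

lemma tv_nonneg:
  assumes "la \<in> ba \<Omega> M" "A \<in> M"
  shows "0 \<le> tv M la A"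
  using tv_upper[OF assms(1) partition_sums_single[OF assms(2)]] by linarith

lemma tv_ba_pos:
  assumes mu: "\<mu> \<in> ba_pos \<Omega> M" and A: "A \<in> M"
  shows "tv M \<mu> A = \<mu> A"
proof -
  have "partition_sums M \<mu> A = {\<mu> A}"
  proof (intro equalityI subsetI)
    fix x assume "x \<in> partition_sums M \<mu> A"
    then obtain P where P: "x = (\<Sum>B\<in>P. \<bar>\<mu> B\<bar>)" "finite P" "P \<subseteq> M" "disjoint P" "\<Union>P = A"
      unfolding partition_sums_def by blast
    have "x = (\<Sum>B\<in>P. \<mu> B)" unfolding P(1) using P(3) ba_posD[OF mu] by (intro sum.cong) auto
    also have "\<dots> = \<mu> A" using additive_Union[OF ba_posD(1)[OF mu] P(2-4)] P(5) by simp
    finally show "x \<in> {\<mu> A}" by simp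
  qed (use partition_sums_single[OF A, of \<mu>] ba_posD(2)[OF mu] A in auto)
  then show ?thesis unfolding tv_eq_Sup by simp
qed

lemma partition_sums_restrict:
  assumes la: "la \<in> ba \<Omega> M" and P: "finite P" "P \<subseteq> M" "disjoint P" and A: "A \<in> M"
  shows "(\<Sum>C\<in>P. \<bar>la (C \<inter> A)\<bar>) \<in> partition_sums M la (\<Union>P \<inter> A)"
proof -
  define P' where "P' = {C\<in>P. C \<inter> A \<noteq> {}}"
  define Q where "Q = (\<lambda>C. C \<inter> A) ` P'"
  have "inj_on (\<lambda>C. C \<inter> A) P'"
    using P(3) unfolding inj_on_def P'_def pairwise_def disjnt_def by blast
  then have "(\<Sum>C\<in>P. \<bar>la (C \<inter> A)\<bar>) = (\<Sum>D\<in>Q. \<bar>la D\<bar>)"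
    using P additive_empty[OF ba_additive[OF la]] unfolding Q_def
    by (subst sum.reindex) (auto simp: P'_def intro: sum.mono_neutral_right)
  moreover have "finite Q" "Q \<subseteq> M" "\<Union>Q = \<Union>P \<inter> A"
    using P A unfolding Q_def P'_def by auto
  moreover have "disjoint Q"
    using P(3) unfolding Q_def P'_def pairwise_def disjnt_def by blast
  ultimately show ?thesis unfolding partition_sums_def by blast
qed

lemma partition_sums_union:
  assumes la: "la \<in> ba \<Omega> M" and x: "x \<in> partition_sums M la A" and y: "y \<in> partition_sums M la B"
    and AB: "A \<inter> B = {}"
  shows "x + y \<in> partition_sums M la (A \<union> B)"
proof -
  obtain P where P: "x = (\<Sum>C\<in>P. \<bar>la C\<bar>)" "finite P" "P \<subseteq> M" "disjoint P" "\<Union>P = A"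
    using x unfolding partition_sums_def by blast
  obtain Q where Q: "y = (\<Sum>C\<in>Q. \<bar>la C\<bar>)" "finite Q" "Q \<subseteq> M" "disjoint Q" "\<Union>Q = B"
    using y unfolding partition_sums_def by blast
  have "P \<inter> Q \<subseteq> {{}}" using P(5) Q(5) AB by blast
  then have "(\<Sum>C\<in>P\<inter>Q. \<bar>la C\<bar>) = 0"
    using additive_empty[OF ba_additive[OF la]] by (intro sum.neutral) auto
  then have "(\<Sum>C\<in>P\<union>Q. \<bar>la C\<bar>) = x + y"
    using sum.union_inter[OF P(2) Q(2), of "\<lambda>C. \<bar>la C\<bar>"] P(1) Q(1) by simp
  moreover have "disjoint (P \<union> Q)"
    using P(4,5) Q(4,5) AB unfolding pairwise_def disjnt_def by blast
  ultimately show ?thesis using P Q unfolding partition_sums_def by (intro CollectI exI[of _ "P \<union> Q"]) auto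
qed

lemma tv_additive:
  assumes la: "la \<in> ba \<Omega> M"
  shows "additive M (tv M la)"
  unfolding additive_def
proof (intro ballI impI antisym)
  fix A B assume A: "A \<in> M" and B: "B \<in> M" and AB: "A \<inter> B = {}"
  show "tv M la (A \<union> B) \<le> tv M la A + tv M la B"
  proof (rule tv_least)
    fix x assume "x \<in> partition_sums M la (A \<union> B)"
    then obtain P where P: "x = (\<Sum>C\<in>P. \<bar>la C\<bar>)" "finite P" "P \<subseteq> M" "disjoint P" "\<Union>P = A \<union> B"
      unfolding partition_sums_def by blast
    have "x \<le> (\<Sum>C\<in>P. \<bar>la (C \<inter> A)\<bar> + \<bar>la (C \<inter> B)\<bar>)"
      unfolding P(1)
    proof (rule sum_mono)
      fix C assume "C \<in> P"
      then have "C \<in> M" "(C \<inter> A) \<union> (C \<inter> B) = C" using P(3,5) by blast+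
      then have "la C = la (C \<inter> A) + la (C \<inter> B)"
        using additiveD[OF ba_additive[OF la], of "C \<inter> A" "C \<inter> B"] A B AB by auto
      then show "\<bar>la C\<bar> \<le> \<bar>la (C \<inter> A)\<bar> + \<bar>la (C \<inter> B)\<bar>" by simp
    qed
    also have "\<dots> \<le> tv M la A + tv M la B"
      unfolding sum.distrib
      using partition_sums_restrict[OF la P(2-4) A] partition_sums_restrict[OF la P(2-4) B] P(5)
      by (intro add_mono tv_upper[OF la]) (simp_all add: Int_absorb1)
    finally show "x \<le> tv M la A + tv M la B" .
  qed (use A B in auto)
  have "tv M la A \<le> tv M la (A \<union> B) - y" if y: "y \<in> partition_sums M la B" for y
    using tv_upper[OF la partition_sums_union[OF la _ y AB]] by (intro tv_least[OF A]) (simp add: le_diff_eq)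
  then have "tv M la B \<le> tv M la (A \<union> B) - tv M la A"
    by (intro tv_least[OF B]) (simp add: le_diff_eq add.commute)
  then show "tv M la A + tv M la B \<le> tv M la (A \<union> B)" by simp
qed

end

definition weight_level :: "'a set \<Rightarrow> ('i \<Rightarrow> 'a set) \<Rightarrow> ('i \<Rightarrow> real) \<Rightarrow> 'i set \<Rightarrow> real \<Rightarrow> 'a set" where
  "weight_level \<Omega> C t I c = {x\<in>\<Omega>. c \<le> (\<Sum>i\<in>I. t i * indicator (C i) x)}"

lemma weight_level_insert:
  assumes "finite I" "j \<notin> I"
  shows "weight_level \<Omega> C t (insert j I) c =
    (C j \<inter> weight_level \<Omega> C t I (c - t j)) \<union> ((\<Omega> - C j) \<inter> weight_level \<Omega> C t I c)"
  unfolding weight_level_def sum.insert[OF assms] by (auto split: split_indicator)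

context algebra begin

lemma weight_level_in:
  assumes "finite I" "\<forall>i\<in>I. C i \<in> M"
  shows "weight_level \<Omega> C t I c \<in> M"
  using assms
proof (induction I arbitrary: c rule: finite_induct)
  case empty
  then show ?case unfolding weight_level_def by (cases "c \<le> 0") auto
next
  case (insert j I)
  then show ?case by (simp add: weight_level_insert Diff Int Un)
qed

lemma markov_weight_level:
  fixes \<nu> :: "'a set \<Rightarrow> real"
  assumes add: "additive M \<nu>" and pos: "\<forall>A\<in>M. 0 \<le> \<nu> A"
    and "finite I" and C: "\<forall>i\<in>I. C i \<in> M" and t: "\<forall>i\<in>I. 0 \<le> t i"
    and "E \<in> M" and "0 < c"
  shows "c * \<nu> (E \<inter> weight_level \<Omega> C t I c) \<le> (\<Sum>i\<in>I. t i * \<nu> (E \<inter> C i))"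
  using assms(3-7)
proof (induction I arbitrary: c E rule: finite_induct)
  case empty
  then have "E \<inter> weight_level \<Omega> C t {} c = {}" unfolding weight_level_def by auto
  then show ?case using additive_empty[OF add] by simp
next
  case (insert j I)
  note mono = increasingD[OF additive_nonneg_increasing[OF add pos]]
  have E: "E \<in> M" and Cj: "C j \<in> M" and C: "\<forall>i\<in>I. C i \<in> M" and tj: "0 \<le> t j"
    and t: "\<forall>i\<in>I. 0 \<le> t i" using insert.prems by auto
  have EC: "E \<inter> C j \<in> M" "E - C j \<in> M" using E Cj by auto
  define L where "L = E \<inter> weight_level \<Omega> C t (insert j I) c"
  have L: "L \<in> M" unfolding L_def using E Cj C insert.hyps(1) by (intro Int weight_level_in) auto
  have L_in: "L \<inter> C j = (E \<inter> C j) \<inter> weight_level \<Omega> C t I (c - t j)"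
    and L_out: "L - C j = (E - C j) \<inter> weight_level \<Omega> C t I c"
    unfolding L_def weight_level_insert[OF insert.hyps] using sets_into_space[OF E] by blast+
  have out_bound: "c * \<nu> (L - C j) \<le> (\<Sum>i\<in>I. t i * \<nu> ((E - C j) \<inter> C i))"
    unfolding L_out using insert.IH[OF C t EC(2) insert.prems(4)] .
  have in_sum_nonneg: "0 \<le> (\<Sum>i\<in>I. t i * \<nu> (E \<inter> C j \<inter> C i))"
    using t C EC pos by (intro sum_nonneg mult_nonneg_nonneg) auto
  have in_le: "\<nu> (L \<inter> C j) \<le> \<nu> (E \<inter> C j)" using L EC Cj by (intro mono) (auto simp: L_def)
  have in_bound: "c * \<nu> (L \<inter> C j) \<le> (\<Sum>i\<in>I. t i * \<nu> (E \<inter> C j \<inter> C i)) + t j * \<nu> (E \<inter> C j)"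
  proof (cases "c \<le> t j")
    case True
    have "c * \<nu> (L \<inter> C j) \<le> t j * \<nu> (E \<inter> C j)"
      using True in_le pos L Cj \<open>0 < c\<close> by (intro mult_mono) auto
    then show ?thesis using in_sum_nonneg by linarith
  next
    case False
    then have "(c - t j) * \<nu> (L \<inter> C j) \<le> (\<Sum>i\<in>I. t i * \<nu> (E \<inter> C j \<inter> C i))"
      unfolding L_in using insert.IH[OF C t EC(1)] by simp
    moreover have "t j * \<nu> (L \<inter> C j) \<le> t j * \<nu> (E \<inter> C j)" using in_le tj by (rule mult_left_mono)
    ultimately show ?thesis by (simp add: left_diff_distrib)
  qed
  have "\<nu> (E \<inter> C i) = \<nu> (E \<inter> C j \<inter> C i) + \<nu> ((E - C j) \<inter> C i)" if "i \<in> I" for i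
  proof -
    have "E \<inter> C i \<inter> C j = E \<inter> C j \<inter> C i" "E \<inter> C i - C j = (E - C j) \<inter> C i" by blast+
    then show ?thesis using additive_split[OF add _ Cj, of "E \<inter> C i"] C E that by auto
  qed
  then have "(\<Sum>i\<in>I. t i * \<nu> (E \<inter> C j \<inter> C i)) + (\<Sum>i\<in>I. t i * \<nu> ((E - C j) \<inter> C i))
      = (\<Sum>i\<in>I. t i * \<nu> (E \<inter> C i))"
    by (simp add: sum.distrib[symmetric] distrib_left[symmetric])
  moreover have "\<nu> L = \<nu> (L \<inter> C j) + \<nu> (L - C j)" by (rule additive_split[OF add L Cj])
  ultimately show ?case
    using in_bound out_bound insert.hyps unfolding L_def by (simp add: distrib_left)
qed

text \<open>Rounding a convex combination of sets: given weights \<open>t\<close> on a finite \<open>N \<subseteq> M\<close> summing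
  to one, the set \<open>A\<close> of points lying in members of \<open>N\<close> of total weight more than one half
  satisfies, by Markov's inequality applied twice, simultaneous bounds on \<open>A\<close> and on its
  complement, uniformly in the nonnegative additive set function.\<close>

lemma convex_combination_rounding:
  fixes t :: "'a set \<Rightarrow> real"
  assumes N: "finite N" "N \<subseteq> M" and t: "\<forall>B\<in>N. 0 \<le> t B" "sum t N = 1"
  obtains A where "A \<in> M"
    and "\<And>\<nu>. additive M \<nu> \<Longrightarrow> \<forall>B\<in>M. 0 \<le> \<nu> B \<Longrightarrow>
           \<nu> A \<le> 2 * (\<Sum>B\<in>N. t B * \<nu> B) \<and> \<nu> (\<Omega> - A) \<le> 2 * (\<Sum>B\<in>N. t B * \<nu> (\<Omega> - B))"
proof
  define L where "L = weight_level \<Omega> (\<lambda>B. \<Omega> - B) t N (1/2)"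
  define H where "H = weight_level \<Omega> (\<lambda>B. B) t N (1/2)"
  have L: "L \<in> M" unfolding L_def using N by (intro weight_level_in) auto
  have H: "H \<in> M" unfolding H_def using N by (intro weight_level_in) auto
  show A: "\<Omega> - L \<in> M" using L by auto
  have compl: "\<Omega> - (\<Omega> - L) = L" using sets_into_space[OF L] by auto
  have "\<Omega> - L \<subseteq> H"
  proof
    fix x assume x: "x \<in> \<Omega> - L"
    have "(\<Sum>B\<in>N. t B * indicator B x) + (\<Sum>B\<in>N. t B * indicator (\<Omega> - B) x) = sum t N"
      using x by (simp add: sum.distrib[symmetric] indicator_def) (intro sum.cong; simp)
    then show "x \<in> H" using x t(2) unfolding H_def L_def weight_level_def by auto
  qed
  fix \<nu> :: "'a set \<Rightarrow> real" assume add: "additive M \<nu>" and pos: "\<forall>B\<in>M. 0 \<le> \<nu> B"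
  have "\<nu> (\<Omega> - L) \<le> \<nu> H"
    using increasingD[OF additive_nonneg_increasing[OF add pos]] A H \<open>\<Omega> - L \<subseteq> H\<close> by blast
  also have "\<dots> \<le> 2 * (\<Sum>B\<in>N. t B * \<nu> B)"
  proof -
    have "(1/2) * \<nu> (\<Omega> \<inter> H) \<le> (\<Sum>B\<in>N. t B * \<nu> (\<Omega> \<inter> B))"
      unfolding H_def using N t by (intro markov_weight_level[OF add pos]) auto
    moreover have "\<Omega> \<inter> H = H" "\<forall>B\<in>N. \<Omega> \<inter> B = B" using sets_into_space H N by blast+
    ultimately show ?thesis by simp
  qed
  finally have "\<nu> (\<Omega> - L) \<le> 2 * (\<Sum>B\<in>N. t B * \<nu> B)" .
  moreover have "(1/2) * \<nu> (\<Omega> \<inter> L) \<le> (\<Sum>B\<in>N. t B * \<nu> (\<Omega> \<inter> (\<Omega> - B)))"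
    unfolding L_def using N t by (intro markov_weight_level[OF add pos]) auto
  then have "\<nu> (\<Omega> - (\<Omega> - L)) \<le> 2 * (\<Sum>B\<in>N. t B * \<nu> (\<Omega> - B))"
    using sets_into_space[OF L] by (simp add: compl Int_absorb1 Diff_subset)
  ultimately show "\<nu> (\<Omega> - L) \<le> 2 * (\<Sum>B\<in>N. t B * \<nu> B) \<and>
      \<nu> (\<Omega> - (\<Omega> - L)) \<le> 2 * (\<Sum>B\<in>N. t B * \<nu> (\<Omega> - B))" ..
qed

end

lemma indicator_simple_fn:
  assumes "algebra \<Omega> \<A>" and B: "B \<in> \<A>"
  shows "simple_fn \<Omega> \<A> (indicator B)"
  unfolding simple_fn_def
proof
  interpret algebra \<Omega> \<A> by fact
  show "finite (indicator B ` \<Omega>)"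
    by (rule finite_subset[of _ "{0,1}"]) (auto simp: indicator_def)
  have "{x \<in> \<Omega>. indicator B x = y} \<in> {B, \<Omega> - B, {}}" for y :: real
    using sets_into_space[OF B] by (auto simp: indicator_def)
  moreover have "{B, \<Omega> - B, {}} \<subseteq> \<A>" using B by auto
  ultimately show "\<forall>y. {x \<in> \<Omega>. indicator B x = (y::real)} \<in> \<A>" by blast
qed

lemma simple_int_indicator:
  fixes \<nu> :: "'a set \<Rightarrow> real"
  assumes "\<nu> {} = 0" and "B \<subseteq> \<Omega>"
  shows "simple_int \<Omega> \<nu> (indicator B) = \<nu> B"
proof -
  let ?g = "\<lambda>y. y * \<nu> {x \<in> \<Omega>. indicator B x = y}"
  have "simple_int \<Omega> \<nu> (indicator B) = sum ?g {0,1}"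
    unfolding simple_int_def
  proof (rule sum.mono_neutral_left)
    show "indicator B ` \<Omega> \<subseteq> {0, 1::real}" by (auto simp: indicator_def)
    show "\<forall>y\<in>{0,1} - indicator B ` \<Omega>. ?g y = 0"
    proof
      fix y :: real assume "y \<in> {0,1} - indicator B ` \<Omega>"
      then have empty: "{x \<in> \<Omega>. indicator B x = y} = {}" by auto
      show "?g y = 0" unfolding empty assms(1) by simp
    qed
  qed simp
  also have "\<dots> = \<nu> B"
    using assms(2) by (auto simp: indicator_def intro!: arg_cong[where f=\<nu>])
  finally show ?thesis .
qed

lemma simple_int_indicator_ba:
  assumes "algebra \<Omega> \<A>" and "\<nu> \<in> ba \<Omega> \<A>" and "B \<in> \<A>"
  shows "simple_int \<Omega> \<nu> (indicator B) = \<nu> B"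
  using algebra.additive_empty[OF assms(1) ba_additive[OF assms(2)]] assms(1,3)
  by (intro simple_int_indicator) (auto simp: algebra_iff_Un)

lemma topspace_wstar:
  assumes "algebra \<Omega> \<A>"
  shows "topspace (wstar \<Omega> \<A>) = UNIV"
proof -
  interpret algebra \<Omega> \<A> by fact
  show ?thesis
    using indicator_simple_fn[OF assms empty_sets] unfolding wstar_def by (auto intro!: exI[of _ UNIV])
qed

lemma wstar_continuous_simple_int:
  assumes "algebra \<Omega> \<A>" and f: "simple_fn \<Omega> \<A> f"
  shows "continuous_map (wstar \<Omega> \<A>) euclideanreal (\<lambda>\<nu>. simple_int \<Omega> \<nu> f)"
  unfolding continuous_map_def topspace_wstar[OF assms(1)]
proof (intro conjI allI impI)
  fix U :: "real set" assume "openin euclideanreal U"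
  then have "{\<nu>. simple_int \<Omega> \<nu> f \<in> U} \<in> {{\<mu>. simple_int \<Omega> \<mu> f \<in> U} | f U. simple_fn \<Omega> \<A> f \<and> open U}"
    using f by auto
  then show "openin (wstar \<Omega> \<A>) {\<nu> \<in> UNIV. simple_int \<Omega> \<nu> f \<in> U}"
    unfolding wstar_def by (simp add: topology_generated_by_Basis)
qed simp

text \<open>On bounded additive set functions, evaluation at a set of the algebra is integration
  against its indicator, hence weak* continuous.\<close>

lemma wstar_continuous_eval:
  assumes alg: "algebra \<Omega> \<A>" and B: "B \<in> \<A>" and K: "K \<subseteq> ba \<Omega> \<A>"
  shows "continuous_map (subtopology (wstar \<Omega> \<A>) K) euclideanreal (\<lambda>\<nu>. \<nu> B)"
proof (rule continuous_map_eq)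
  show "continuous_map (subtopology (wstar \<Omega> \<A>) K) euclideanreal (\<lambda>\<nu>. simple_int \<Omega> \<nu> (indicator B))"
    by (intro continuous_map_from_subtopology wstar_continuous_simple_int indicator_simple_fn alg B)
qed (use simple_int_indicator_ba[OF alg _ B] K in auto)

lemma wstar_compact_finite_witnesses:
  fixes c :: "'a set \<Rightarrow> real"
  assumes alg: "algebra \<Omega> \<A>" and K: "K \<subseteq> ba \<Omega> \<A>" and cpt: "compactin (wstar \<Omega> \<A>) K"
    and wit: "\<forall>\<mu>\<in>K. \<exists>B\<in>\<A>. \<mu> B < c B"
  obtains N where "finite N" "N \<subseteq> \<A>" "\<forall>\<nu>\<in>K. \<exists>B\<in>N. \<nu> B < c B"
proof -
  have "\<exists>W. \<forall>\<mu>\<in>K. W \<mu> \<in> \<A> \<and> \<mu> (W \<mu>) < c (W \<mu>)"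
    by (rule bchoice) (use wit in blast)
  then obtain W where W: "\<forall>\<mu>\<in>K. W \<mu> \<in> \<A> \<and> \<mu> (W \<mu>) < c (W \<mu>)" by blast
  define U where "U \<mu> = {\<nu>. simple_int \<Omega> \<nu> (indicator (W \<mu>)) \<in> {..<c (W \<mu>)}}" for \<mu>
  have "openin (wstar \<Omega> \<A>) (U \<mu>)" if "\<mu> \<in> K" for \<mu>
    using openin_continuous_map_preimage[OF wstar_continuous_simple_int[OF alg indicator_simple_fn[OF alg]],
        of "W \<mu>" "{..<c (W \<mu>)}"] W that
    unfolding U_def topspace_wstar[OF alg] by auto
  moreover have "K \<subseteq> \<Union>(U ` K)"
  proof
    fix \<mu> assume "\<mu> \<in> K"
    then have "\<mu> \<in> U \<mu>"
      using W K simple_int_indicator_ba[OF alg, of \<mu> "W \<mu>"] unfolding U_def by auto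
    then show "\<mu> \<in> \<Union>(U ` K)" using \<open>\<mu> \<in> K\<close> by blast
  qed
  ultimately obtain F where F: "finite F" "F \<subseteq> U ` K" "K \<subseteq> \<Union>F"
    using compactinD[OF cpt, of "U ` K"] by blast
  obtain N0 where N0: "N0 \<subseteq> K" "finite N0" "F = U ` N0"
    using finite_subset_image[OF F(1,2)] by blast
  show ?thesis
  proof
    show "finite (W ` N0)" "W ` N0 \<subseteq> \<A>" using N0 W by auto
    show "\<forall>\<nu>\<in>K. \<exists>B\<in>W ` N0. \<nu> B < c B"
    proof
      fix \<nu> assume "\<nu> \<in> K"
      then obtain \<mu> where "\<mu> \<in> N0" "\<nu> \<in> U \<mu>" using F(3) N0(3) by blast
      moreover have "simple_int \<Omega> \<nu> (indicator (W \<mu>)) = \<nu> (W \<mu>)"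
        using simple_int_indicator_ba[OF alg] W K N0(1) \<open>\<nu> \<in> K\<close> \<open>\<mu> \<in> N0\<close> by blast
      ultimately show "\<exists>B\<in>W ` N0. \<nu> B < c B" unfolding U_def by auto
    qed
  qed
qed

lemma wstar_compact_convex_averaging:
  fixes \<rho> :: "'a set \<Rightarrow> real"
  assumes alg: "algebra \<Omega> \<A>" and M: "M \<subseteq> ba_pos \<Omega> \<A>" and conv: "convex_sf M"
    and cpt: "compactin (wstar \<Omega> \<A>) M" and ne: "M \<noteq> {}"
    and wit: "\<forall>\<mu>\<in>M. \<exists>B\<in>\<A>. \<mu> B + \<rho> B < \<delta>"
  obtains N t where "finite N" "N \<subseteq> \<A>" "\<forall>B\<in>N. 0 \<le> t B" "sum t N = 1"
    "\<forall>\<nu>\<in>M. (\<Sum>B\<in>N. t B * (\<nu> B + \<rho> B)) < \<delta>"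
proof -
  have Mba: "M \<subseteq> ba \<Omega> \<A>" using M unfolding ba_pos_def by auto
  obtain N where N: "finite N" "N \<subseteq> \<A>" "\<forall>\<nu>\<in>M. \<exists>B\<in>N. \<nu> B < \<delta> - \<rho> B"
    using wstar_compact_finite_witnesses[OF alg Mba cpt, of "\<lambda>B. \<delta> - \<rho> B"] wit
    by (auto simp: less_diff_eq)
  have "\<exists>t. (\<forall>B\<in>N. 0 \<le> t B) \<and> sum t N = 1 \<and> (\<forall>\<nu>\<in>M. (\<Sum>B\<in>N. t B * (\<nu> B + \<rho> B - \<delta>)) < 0)"
  proof (rule minimax_finite[OF N(1) cpt, where mix="\<lambda>s \<mu> \<nu> A. s * \<mu> A + (1 - s) * \<nu> A"
        and g="\<lambda>B \<nu>. \<nu> B + \<rho> B - \<delta>"])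
    show "(\<lambda>A. s * \<mu> A + (1 - s) * \<nu> A) \<in> M" if "\<mu> \<in> M" "\<nu> \<in> M" "0 \<le> s" "s \<le> 1" for s \<mu> \<nu>
      using conv that unfolding convex_sf_def by blast
    show "\<forall>B\<in>N. affine_cont_on (wstar \<Omega> \<A>) M (\<lambda>s \<mu> \<nu> A. s * \<mu> A + (1 - s) * \<nu> A)
        (\<lambda>\<nu>. \<nu> B + \<rho> B - \<delta>)"
    proof
      fix B assume "B \<in> N"
      then have "continuous_map (subtopology (wstar \<Omega> \<A>) M) euclideanreal (\<lambda>\<nu>. \<nu> B + \<rho> B - \<delta>)"
        using N(2) by (intro continuous_intros wstar_continuous_eval[OF alg _ Mba]) auto
      then show "affine_cont_on (wstar \<Omega> \<A>) M (\<lambda>s \<mu> \<nu> A. s * \<mu> A + (1 - s) * \<nu> A)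
          (\<lambda>\<nu>. \<nu> B + \<rho> B - \<delta>)"
        unfolding affine_cont_on_def by (simp add: algebra_simps)
    qed
    show "\<exists>B\<in>N. \<nu> B + \<rho> B - \<delta> < 0" if \<nu>: "\<nu> \<in> M" for \<nu>
    proof -
      obtain B where "B \<in> N" "\<nu> B < \<delta> - \<rho> B" using bspec[OF N(3) \<nu>] by (elim bexE)
      then have "\<nu> B + \<rho> B - \<delta> < 0" by linarith
      with \<open>B \<in> N\<close> show ?thesis by blast
    qed
  qed (use ne in auto)
  then obtain t where t: "\<forall>B\<in>N. 0 \<le> t B" "sum t N = 1"
    "\<forall>\<nu>\<in>M. (\<Sum>B\<in>N. t B * (\<nu> B + \<rho> B - \<delta>)) < 0" by blast
  have shift: "(\<Sum>B\<in>N. t B * (\<nu> B + \<rho> B - \<delta>)) = (\<Sum>B\<in>N. t B * (\<nu> B + \<rho> B)) - \<delta>"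
    for \<nu> :: "'a set \<Rightarrow> real"
    using t(2) by (simp add: right_diff_distrib sum_subtractf sum_distrib_right[symmetric])
  show thesis
    by (rule that[OF N(1,2) t(1,2)]) (use t(3) in \<open>simp add: shift\<close>)
qed

lemma singular_witness:
  assumes alg: "algebra \<Omega> \<A>" and mu: "\<mu> \<in> ba_pos \<Omega> \<A>"
    and sing: "singular \<Omega> \<A> la \<mu>" and "0 < \<delta>"
  shows "\<exists>B\<in>\<A>. \<mu> B + tv \<A> la (\<Omega> - B) < \<delta>"
proof -
  interpret algebra \<Omega> \<A> by fact
  obtain A where A: "A \<in> \<A>" "tv \<A> la A + tv \<A> \<mu> (\<Omega> - A) < \<delta>"
    using sing \<open>0 < \<delta>\<close> unfolding singular_def by blast
  have "\<Omega> - (\<Omega> - A) = A" "\<Omega> - A \<in> \<A>" using sets_into_space[OF A(1)] A(1) by auto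
  then have "\<mu> (\<Omega> - A) + tv \<A> la (\<Omega> - (\<Omega> - A)) < \<delta>"
    using A tv_ba_pos[OF mu, of "\<Omega> - A"] by auto
  then show ?thesis using \<open>\<Omega> - A \<in> \<A>\<close> by blast
qed

lemma unif_singular_singular:
  assumes alg: "algebra \<Omega> \<A>" and U: "unif_singular \<Omega> \<A> la M" and "\<mu> \<in> M"
  shows "singular \<Omega> \<A> la \<mu>"
  unfolding singular_def
proof (intro allI impI)
  interpret algebra \<Omega> \<A> by fact
  fix \<epsilon> :: real assume "0 < \<epsilon>"
  then obtain A c where A: "A \<in> \<A>" "tv \<A> \<mu> A \<le> c" "c + tv \<A> la (\<Omega> - A) < \<epsilon>"
    using U \<open>\<mu> \<in> M\<close> unfolding unif_singular_def by blast
  have "\<Omega> - (\<Omega> - A) = A" using sets_into_space[OF A(1)] by auto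
  then show "\<exists>A\<in>\<A>. tv \<A> la A + tv \<A> \<mu> (\<Omega> - A) < \<epsilon>"
    using A by (intro bexI[of _ "\<Omega> - A"]) auto
qed

text \<open>From an average to a single set: if weights \<open>t\<close> on finitely many sets \<open>B\<close> make the
  average of \<open>\<nu> B + |\<lambda>|(\<Omega> - B)\<close> smaller than \<open>\<delta>\<close> for every \<open>\<nu>\<close> in the family, the rounded set
  \<open>A\<close> satisfies \<open>\<nu> A + |\<lambda>|(\<Omega> - A) < 2\<delta>\<close> for every \<open>\<nu>\<close>, as \<open>|\<lambda>|\<close> is additive.\<close>

lemma rounded_uniform_witness:
  assumes alg: "algebra \<Omega> \<A>" and la: "la \<in> ba \<Omega> \<A>" and M: "M \<subseteq> ba_pos \<Omega> \<A>"
    and N: "finite N" "N \<subseteq> \<A>" and t: "\<forall>B\<in>N. 0 \<le> t B" "sum t N = 1"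
    and avg: "\<forall>\<nu>\<in>M. (\<Sum>B\<in>N. t B * (\<nu> B + tv \<A> la (\<Omega> - B))) < \<delta>"
  obtains A where "A \<in> \<A>" "\<forall>\<nu>\<in>M. tv \<A> \<nu> A + tv \<A> la (\<Omega> - A) < 2 * \<delta>"
proof -
  interpret algebra \<Omega> \<A> by fact
  obtain A where A: "A \<in> \<A>" and rounded: "\<And>\<nu>. additive \<A> \<nu> \<Longrightarrow> \<forall>B\<in>\<A>. 0 \<le> \<nu> B \<Longrightarrow>
      \<nu> A \<le> 2 * (\<Sum>B\<in>N. t B * \<nu> B) \<and> \<nu> (\<Omega> - A) \<le> 2 * (\<Sum>B\<in>N. t B * \<nu> (\<Omega> - B))"
    by (rule convex_combination_rounding[OF N t]) (rule that)
  have "\<forall>B\<in>\<A>. 0 \<le> tv \<A> la B" using tv_nonneg[OF la] by blast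
  then have la_bound: "tv \<A> la (\<Omega> - A) \<le> 2 * (\<Sum>B\<in>N. t B * tv \<A> la (\<Omega> - B))"
    using rounded[OF tv_additive[OF la]] by blast
  have "\<forall>\<nu>\<in>M. tv \<A> \<nu> A + tv \<A> la (\<Omega> - A) < 2 * \<delta>"
  proof
    fix \<nu> assume \<nu>M: "\<nu> \<in> M"
    have \<nu>: "\<nu> \<in> ba_pos \<Omega> \<A>" using M \<nu>M by auto
    have "tv \<A> \<nu> A \<le> 2 * (\<Sum>B\<in>N. t B * \<nu> B)"
      using rounded[OF ba_posD[OF \<nu>]] tv_ba_pos[OF \<nu> A] by simp
    then have "tv \<A> \<nu> A + tv \<A> la (\<Omega> - A) \<le> 2 * (\<Sum>B\<in>N. t B * (\<nu> B + tv \<A> la (\<Omega> - B)))"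
      using la_bound by (simp add: distrib_left sum.distrib)
    then show "tv \<A> \<nu> A + tv \<A> la (\<Omega> - A) < 2 * \<delta>" using avg \<nu>M by fastforce
  qed
  with A show thesis by (rule that)
qed

text \<open>For \<open>\<epsilon> > 0\<close> every \<open>\<mu>\<close> has a set \<open>B\<close> with
  \<open>\<mu> B + |\<lambda>|(\<Omega> - B) < \<epsilon>/4\<close>; the minimax step averages finitely many of them, and rounding
  the average yields one set \<open>A\<close> with \<open>\<mu> A + |\<lambda>|(\<Omega> - A) < \<epsilon>/2\<close> for all \<open>\<mu>\<close>.\<close>

lemma singular_unif_singular:
  assumes alg: "algebra \<Omega> \<A>" and la: "la \<in> ba \<Omega> \<A>" and M: "M \<subseteq> ba_pos \<Omega> \<A>"
    and conv: "convex_sf M" and cpt: "compactin (wstar \<Omega> \<A>) M"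
    and sing: "\<forall>\<mu>\<in>M. singular \<Omega> \<A> la \<mu>"
  shows "unif_singular \<Omega> \<A> la M"
  unfolding unif_singular_def
proof (intro allI impI)
  fix \<epsilon> :: real assume "0 < \<epsilon>"
  show "\<exists>A\<in>\<A>. \<exists>c. (\<forall>\<mu>\<in>M. tv \<A> \<mu> A \<le> c) \<and> c + tv \<A> la (\<Omega> - A) < \<epsilon>"
  proof (cases "M = {}")
    case True
    have "{} \<in> \<A>" using alg by (simp add: algebra_iff_Un)
    then show ?thesis using True \<open>0 < \<epsilon>\<close> by (intro bexI[of _ "{}"] exI[of _ "- tv \<A> la \<Omega>"]) auto
  next
    case False
    have "\<forall>\<mu>\<in>M. \<exists>B\<in>\<A>. \<mu> B + tv \<A> la (\<Omega> - B) < \<epsilon>/4"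
      using singular_witness[OF alg] sing M \<open>0 < \<epsilon>\<close> by (meson divide_pos_pos subsetD zero_less_numeral)
    then obtain N t where "finite N" "N \<subseteq> \<A>" "\<forall>B\<in>N. 0 \<le> t B" "sum t N = 1"
      "\<forall>\<nu>\<in>M. (\<Sum>B\<in>N. t B * (\<nu> B + tv \<A> la (\<Omega> - B))) < \<epsilon>/4"
      by (rule wstar_compact_convex_averaging[OF alg M conv cpt False])
    then obtain A where A: "A \<in> \<A>" and unif: "\<forall>\<nu>\<in>M. tv \<A> \<nu> A + tv \<A> la (\<Omega> - A) < 2 * (\<epsilon>/4)"
      by (rule rounded_uniform_witness[OF alg la M])
    show ?thesis
    proof (intro bexI[OF _ A] exI[of _ "\<epsilon>/2 - tv \<A> la (\<Omega> - A)"] conjI ballI)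
      show "tv \<A> \<nu> A \<le> \<epsilon>/2 - tv \<A> la (\<Omega> - A)" if "\<nu> \<in> M" for \<nu>
        using unif that by fastforce
    qed (use \<open>0 < \<epsilon>\<close> in simp)
  qed
qed

theorem mainTheorem3:
  fixes \<Omega> :: "'a set" and \<A> :: "'a set set"
    and la :: "'a set \<Rightarrow> real" and M :: "('a set \<Rightarrow> real) set"
  assumes "algebra \<Omega> \<A>"
    and "la \<in> ba \<Omega> \<A>"
    and "M \<subseteq> ba_pos \<Omega> \<A>"
    and "convex_sf M"
    and "compactin (wstar \<Omega> \<A>) M"
  shows "(\<forall>\<mu>\<in>M. singular \<Omega> \<A> la \<mu>) \<longleftrightarrow> unif_singular \<Omega> \<A> la M"
  using singular_unif_singular[OF assms] unif_singular_singular[OF assms(1)] by blast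

end
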